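(* Let $(G,\alpha,\mathcal A)$ and $(G,\beta,\mathcal B)$ be unital $C^*$-dynamical systems of a finite group $G$, let $E$ be a $\mathcal B$-$\mathcal A$ Hilbert bimodule which is full with respect to both inner products, and let $\eta$ be a $(\beta,\alpha)$-compatible action of $G$ on $E$. If $\eta$ has the Rokhlin property, then $\eta$ is outer.
   Context: A $\mathcal B$-$\mathcal A$ Hilbert bimodule $E$ is a left Hilbert $\mathcal B$-module and right Hilbert $\mathcal A$-module with ${}_{\mathcal B}\langle x,y\rangle z=x\langle y,z\rangle_{\mathcal A}$; full means both inner products have dense span in $\mathcal B$, resp. $\mathcal A$. A $(\beta,\alpha)$-compatible action: $\eta_g$ invertible linear maps, $g\mapsto\eta_g$ a homomorphism, with $\eta_g(bx)=\beta_g(b)\eta_g(x)$, $\eta_g(xa)=\eta_g(x)\alpha_g(a)$, ${}_{\mathcal B}\langle\eta_gx,\eta_gy\rangle=\beta_g({}_{\mathcal B}\langle x,y\rangle)$, $\langle\eta_gx,\eta_gy\rangle_{\mathcal A}=\alpha_g(\langle x,y\rangle_{\mathcal A})$. Rokhlin property of $\eta$: for every $\epsilon>0$, finite $S_1,S_2\subset E$, $S_3\subset\mathcal B$, $S_4\subset\mathcal A$ there are mutually orthogonal positive contractions $(a_g)_{g\in G}\subset\mathcal A$ and $(b_g)_{g\in G}\subset\mathcal B$ with $\|\sum_ga_gu-u\|<\epsilon$ ($u\in S_2^*\cup S_4$), $\|\sum_gb_gv-v\|<\epsilon$ ($v\in S_1\cup S_3$), $\|\alpha_h(a_g)-a_{hg}\|<\epsilon$,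 $\|\beta_h(b_g)-b_{hg}\|<\epsilon$, $\|xa_g-b_gx\|<\epsilon$, $\|tb_g-b_gt\|<\epsilon$, $\|a_ga-aa_g\|<\epsilon$, $\|a_gy^*-y^*b_g\|<\epsilon$ for all $x\in S_1,y\in S_2,t\in S_3,a\in S_4$, $g,h\in G$. For unitaries $u\in\mathcal A$, $u'\in\mathcal B$, $\mathrm{Ad}(u',u)(x):=u'^*xu$. $\eta$ is outer if for every $t\in G\setminus\{e\}$, $\eta_t\ne\mathrm{Ad}(u',u)$ for all unitaries $u\in\mathcal A$, $u'\in\mathcal B$. *)

theory Defs
  imports "HOL-Analysis.Analysis" "HOL-Algebra.Group"
begin

text \<open>A unital C*-algebra is modelled on a type of class real_normed_algebra_1 and banach
(so it is a complete normed real algebra with unit 1 and norm 1 = 1, in particular nonzero),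
together with a complex scalar multiplication sm extending scaleR and an involution st.\<close>

definition cstar_algebra ::
  "(complex \<Rightarrow> 'a::{real_normed_algebra_1,banach} \<Rightarrow> 'a) \<Rightarrow> ('a \<Rightarrow> 'a) \<Rightarrow> bool" where
  "cstar_algebra sm st \<longleftrightarrow>
     (\<forall>x. sm 1 x = x) \<and>
     (\<forall>c d x. sm c (sm d x) = sm (c * d) x) \<and>
     (\<forall>c x y. sm c (x + y) = sm c x + sm c y) \<and>
     (\<forall>c d x. sm (c + d) x = sm c x + sm d x) \<and>
     (\<forall>r x. sm (complex_of_real r) x = scaleR r x) \<and>
     (\<forall>c x y. sm c (x * y) = sm c x * y \<and> sm c (x * y) = x * sm c y) \<and>
     (\<forall>c x. norm (sm c x) = cmod c * norm x) \<and>
     (\<forall>x. st (st x) = x) \<and>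
     (\<forall>x y. st (x + y) = st x + st y) \<and>
     (\<forall>c x. st (sm c x) = sm (cnj c) (st x)) \<and>
     (\<forall>x y. st (x * y) = st y * st x) \<and>
     (\<forall>x. norm (st x * x) = (norm x)\<^sup>2)"

definition cstar_positive :: "('a::times \<Rightarrow> 'a) \<Rightarrow> 'a \<Rightarrow> bool" where
  "cstar_positive st a \<longleftrightarrow> (\<exists>b. a = st b * b)"

definition positive_contraction :: "('a::real_normed_algebra \<Rightarrow> 'a) \<Rightarrow> 'a \<Rightarrow> bool" where
  "positive_contraction st a \<longleftrightarrow> cstar_positive st a \<and> norm a \<le> 1"

definition cstar_unitary :: "('a::monoid_mult \<Rightarrow> 'a) \<Rightarrow> 'a \<Rightarrow> bool" where
  "cstar_unitary st u \<longleftrightarrow> st u * u = 1 \<and> u * st u = 1"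

definition star_automorphism ::
  "(complex \<Rightarrow> 'a::ring \<Rightarrow> 'a) \<Rightarrow> ('a \<Rightarrow> 'a) \<Rightarrow> ('a \<Rightarrow> 'a) \<Rightarrow> bool" where
  "star_automorphism sm st f \<longleftrightarrow>
     bij f \<and>
     (\<forall>x y. f (x + y) = f x + f y) \<and>
     (\<forall>c x. f (sm c x) = sm c (f x)) \<and>
     (\<forall>x y. f (x * y) = f x * f y) \<and>
     (\<forall>x. f (st x) = st (f x))"

definition cstar_dynsys ::
  "'g monoid \<Rightarrow> (complex \<Rightarrow> 'a::{real_normed_algebra_1,banach} \<Rightarrow> 'a) \<Rightarrow> ('a \<Rightarrow> 'a)
     \<Rightarrow> ('g \<Rightarrow> 'a \<Rightarrow> 'a) \<Rightarrow> bool" where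
  "cstar_dynsys G sm st alpha \<longleftrightarrow>
     group G \<and> cstar_algebra sm st \<and>
     (\<forall>g\<in>carrier G. star_automorphism sm st (alpha g)) \<and>
     (\<forall>g\<in>carrier G. \<forall>h\<in>carrier G. alpha (g \<otimes>\<^bsub>G\<^esub> h) = alpha g \<circ> alpha h) \<and>
     alpha \<one>\<^bsub>G\<^esub> = id"

definition hnorm :: "('e \<Rightarrow> 'e \<Rightarrow> 'a::real_normed_vector) \<Rightarrow> 'e \<Rightarrow> real" where
  "hnorm ip x = sqrt (norm (ip x x))"

definition hcomplete :: "('e::ab_group_add \<Rightarrow> 'e \<Rightarrow> 'a::real_normed_vector) \<Rightarrow> bool" where
  "hcomplete ip \<longleftrightarrow>
     (\<forall>X::nat \<Rightarrow> 'e. (\<forall>e>0. \<exists>N. \<forall>m\<ge>N. \<forall>n\<ge>N. hnorm ip (X m - X n) < e)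
        \<longrightarrow> (\<exists>L. (\<lambda>n. hnorm ip (X n - L)) \<longlonglongrightarrow> 0))"

definition right_hilbert_module ::
  "(complex \<Rightarrow> 'e::ab_group_add \<Rightarrow> 'e) \<Rightarrow>
   (complex \<Rightarrow> 'a::{real_normed_algebra_1,banach} \<Rightarrow> 'a) \<Rightarrow> ('a \<Rightarrow> 'a) \<Rightarrow>
   ('e \<Rightarrow> 'a \<Rightarrow> 'e) \<Rightarrow> ('e \<Rightarrow> 'e \<Rightarrow> 'a) \<Rightarrow> bool" where
  "right_hilbert_module esm sm st ract ip \<longleftrightarrow>
     (\<forall>x. esm 1 x = x) \<and>
     (\<forall>c d x. esm c (esm d x) = esm (c * d) x) \<and>
     (\<forall>c x y. esm c (x + y) = esm c x + esm c y) \<and>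
     (\<forall>c d x. esm (c + d) x = esm c x + esm d x) \<and>
     (\<forall>x a a'. ract x (a * a') = ract (ract x a) a') \<and>
     (\<forall>x y a. ract (x + y) a = ract x a + ract y a) \<and>
     (\<forall>x a a'. ract x (a + a') = ract x a + ract x a') \<and>
     (\<forall>c x a. ract (esm c x) a = esm c (ract x a) \<and> ract x (sm c a) = esm c (ract x a)) \<and>
     (\<forall>x y z. ip x (y + z) = ip x y + ip x z) \<and>
     (\<forall>c x y. ip x (esm c y) = sm c (ip x y)) \<and>
     (\<forall>x y a. ip x (ract y a) = ip x y * a) \<and>
     (\<forall>x y. st (ip x y) = ip y x) \<and>
     (\<forall>x. cstar_positive st (ip x x)) \<and>
     (\<forall>x. ip x x = 0 \<longrightarrow> x = 0) \<and>
     hcomplete ip"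

definition left_hilbert_module ::
  "(complex \<Rightarrow> 'e::ab_group_add \<Rightarrow> 'e) \<Rightarrow>
   (complex \<Rightarrow> 'b::{real_normed_algebra_1,banach} \<Rightarrow> 'b) \<Rightarrow> ('b \<Rightarrow> 'b) \<Rightarrow>
   ('b \<Rightarrow> 'e \<Rightarrow> 'e) \<Rightarrow> ('e \<Rightarrow> 'e \<Rightarrow> 'b) \<Rightarrow> bool" where
  "left_hilbert_module esm sm st lact ip \<longleftrightarrow>
     (\<forall>x. esm 1 x = x) \<and>
     (\<forall>c d x. esm c (esm d x) = esm (c * d) x) \<and>
     (\<forall>c x y. esm c (x + y) = esm c x + esm c y) \<and>
     (\<forall>c d x. esm (c + d) x = esm c x + esm d x) \<and>
     (\<forall>x b b'. lact (b * b') x = lact b (lact b' x)) \<and>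
     (\<forall>x y b. lact b (x + y) = lact b x + lact b y) \<and>
     (\<forall>x b b'. lact (b + b') x = lact b x + lact b' x) \<and>
     (\<forall>c x b. lact b (esm c x) = esm c (lact b x) \<and> lact (sm c b) x = esm c (lact b x)) \<and>
     (\<forall>x y z. ip (x + y) z = ip x z + ip y z) \<and>
     (\<forall>c x y. ip (esm c x) y = sm c (ip x y)) \<and>
     (\<forall>x y b. ip (lact b x) y = b * ip x y) \<and>
     (\<forall>x y. st (ip x y) = ip y x) \<and>
     (\<forall>x. cstar_positive st (ip x x)) \<and>
     (\<forall>x. ip x x = 0 \<longrightarrow> x = 0) \<and>
     hcomplete ip"

text \<open>Fullness: the linear span of the values of the inner product is dense.
(The span equals the set of finite sums of inner products, since ip is linear in one slot.)\<close>
definition full_ip :: "('e \<Rightarrow> 'e \<Rightarrow> 'a::real_normed_vector) \<Rightarrow> bool" where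
  "full_ip ip \<longleftrightarrow> closure {\<Sum>i<n. ip (x i) (y i) | (n::nat) x y. True} = UNIV"

definition hilbert_bimodule ::
  "(complex \<Rightarrow> 'e::ab_group_add \<Rightarrow> 'e) \<Rightarrow>
   (complex \<Rightarrow> 'b::{real_normed_algebra_1,banach} \<Rightarrow> 'b) \<Rightarrow> ('b \<Rightarrow> 'b) \<Rightarrow>
   (complex \<Rightarrow> 'a::{real_normed_algebra_1,banach} \<Rightarrow> 'a) \<Rightarrow> ('a \<Rightarrow> 'a) \<Rightarrow>
   ('b \<Rightarrow> 'e \<Rightarrow> 'e) \<Rightarrow> ('e \<Rightarrow> 'a \<Rightarrow> 'e) \<Rightarrow>
   ('e \<Rightarrow> 'e \<Rightarrow> 'b) \<Rightarrow> ('e \<Rightarrow> 'e \<Rightarrow> 'a) \<Rightarrow> bool" where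
  "hilbert_bimodule esm smB stB smA stA lact ract ipB ipA \<longleftrightarrow>
     left_hilbert_module esm smB stB lact ipB \<and>
     right_hilbert_module esm smA stA ract ipA \<and>
     (\<forall>b x a. ract (lact b x) a = lact b (ract x a)) \<and>
     (\<forall>x y z. lact (ipB x y) z = ract x (ipA y z))"

definition compatible_action ::
  "'g monoid \<Rightarrow> (complex \<Rightarrow> 'e::ab_group_add \<Rightarrow> 'e) \<Rightarrow>
   ('b \<Rightarrow> 'e \<Rightarrow> 'e) \<Rightarrow> ('e \<Rightarrow> 'a \<Rightarrow> 'e) \<Rightarrow> ('e \<Rightarrow> 'e \<Rightarrow> 'b) \<Rightarrow> ('e \<Rightarrow> 'e \<Rightarrow> 'a) \<Rightarrow>
   ('g \<Rightarrow> 'b \<Rightarrow> 'b) \<Rightarrow> ('g \<Rightarrow> 'a \<Rightarrow> 'a) \<Rightarrow> ('g \<Rightarrow> 'e \<Rightarrow> 'e) \<Rightarrow> bool" where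
  "compatible_action G esm lact ract ipB ipA beta alpha eta \<longleftrightarrow>
     (\<forall>g\<in>carrier G. bij (eta g) \<and>
        (\<forall>x y. eta g (x + y) = eta g x + eta g y) \<and>
        (\<forall>c x. eta g (esm c x) = esm c (eta g x)) \<and>
        (\<forall>b x. eta g (lact b x) = lact (beta g b) (eta g x)) \<and>
        (\<forall>x a. eta g (ract x a) = ract (eta g x) (alpha g a)) \<and>
        (\<forall>x y. ipB (eta g x) (eta g y) = beta g (ipB x y)) \<and>
        (\<forall>x y. ipA (eta g x) (eta g y) = alpha g (ipA x y))) \<and>
     (\<forall>g\<in>carrier G. \<forall>h\<in>carrier G. eta (g \<otimes>\<^bsub>G\<^esub> h) = eta g \<circ> eta h)"

text \<open>Elements y* of the conjugate module (y in S2) are handled through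
the identities a y* = (y a*)* and y* b = (b* y)*, and the norm of E* equals the norm of E;
hence the conditions on S2* are stated for y in S2 directly on E.\<close>
definition rokhlin ::
  "'g monoid \<Rightarrow> ('b::{real_normed_algebra_1,banach} \<Rightarrow> 'b) \<Rightarrow> ('a::{real_normed_algebra_1,banach} \<Rightarrow> 'a) \<Rightarrow>
   ('b \<Rightarrow> 'e::ab_group_add \<Rightarrow> 'e) \<Rightarrow> ('e \<Rightarrow> 'a \<Rightarrow> 'e) \<Rightarrow> ('e \<Rightarrow> 'e \<Rightarrow> 'a) \<Rightarrow>
   ('g \<Rightarrow> 'b \<Rightarrow> 'b) \<Rightarrow> ('g \<Rightarrow> 'a \<Rightarrow> 'a) \<Rightarrow> bool" where
  "rokhlin G stB stA lact ract ipA beta alpha \<longleftrightarrow>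
     (\<forall>\<epsilon>>0. \<forall>S1 S2 :: 'e set. \<forall>S3 :: 'b set. \<forall>S4 :: 'a set.
        finite S1 \<longrightarrow> finite S2 \<longrightarrow> finite S3 \<longrightarrow> finite S4 \<longrightarrow>
        (\<exists>(a :: 'g \<Rightarrow> 'a) (b :: 'g \<Rightarrow> 'b).
           (\<forall>g\<in>carrier G. positive_contraction stA (a g) \<and> positive_contraction stB (b g)) \<and>
           (\<forall>g\<in>carrier G. \<forall>h\<in>carrier G. g \<noteq> h \<longrightarrow> a g * a h = 0 \<and> b g * b h = 0) \<and>
           (\<forall>y\<in>S2. hnorm ipA (ract y (\<Sum>g\<in>carrier G. a g) - y) < \<epsilon>) \<and>
           (\<forall>u\<in>S4. norm ((\<Sum>g\<in>carrier G. a g) * u - u) < \<epsilon>) \<and>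
           (\<forall>v\<in>S1. hnorm ipA (lact (\<Sum>g\<in>carrier G. b g) v - v) < \<epsilon>) \<and>
           (\<forall>v\<in>S3. norm ((\<Sum>g\<in>carrier G. b g) * v - v) < \<epsilon>) \<and>
           (\<forall>g\<in>carrier G. \<forall>h\<in>carrier G.
              norm (alpha h (a g) - a (h \<otimes>\<^bsub>G\<^esub> g)) < \<epsilon> \<and>
              norm (beta h (b g) - b (h \<otimes>\<^bsub>G\<^esub> g)) < \<epsilon>) \<and>
           (\<forall>g\<in>carrier G.
              (\<forall>x\<in>S1. hnorm ipA (ract x (a g) - lact (b g) x) < \<epsilon>) \<and>
              (\<forall>t\<in>S3. norm (t * b g - b g * t) < \<epsilon>) \<and>
              (\<forall>u\<in>S4. norm (a g * u - u * a g) < \<epsilon>) \<and>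
              (\<forall>y\<in>S2. hnorm ipA (ract y (a g) - lact (b g) y) < \<epsilon>))))"

definition Ad_bimod :: "('b \<Rightarrow> 'b) \<Rightarrow> ('b \<Rightarrow> 'e \<Rightarrow> 'e) \<Rightarrow> ('e \<Rightarrow> 'a \<Rightarrow> 'e) \<Rightarrow> 'b \<Rightarrow> 'a \<Rightarrow> 'e \<Rightarrow> 'e" where
  "Ad_bimod stB lact ract u' u = (\<lambda>x. lact (stB u') (ract x u))"

definition outer_action ::
  "'g monoid \<Rightarrow> ('b::monoid_mult \<Rightarrow> 'b) \<Rightarrow> ('a::monoid_mult \<Rightarrow> 'a) \<Rightarrow>
   ('b \<Rightarrow> 'e \<Rightarrow> 'e) \<Rightarrow> ('e \<Rightarrow> 'a \<Rightarrow> 'e) \<Rightarrow> ('g \<Rightarrow> 'e \<Rightarrow> 'e) \<Rightarrow> bool" where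
  "outer_action G stB stA lact ract eta \<longleftrightarrow>
     (\<forall>t\<in>carrier G - {\<one>\<^bsub>G\<^esub>}. \<forall>u u'. cstar_unitary stA u \<longrightarrow> cstar_unitary stB u' \<longrightarrow>
        eta t \<noteq> Ad_bimod stB lact ract u' u)"

end

theory Submission
  imports Defs
begin

(* If eta_t = Ad(u',u), comparing A-valued inner products gives
   alpha_t <x,y> = u* <x,y> u; since A is the linear span of its inner products (fullness plus a
   Neumann series), alpha_t = Ad u on all of A. Now take Rokhlin towers (a_g) almost commuting
   with u: then alpha_t(a_g) is close both to a_g and to a_(tg), which is orthogonal to a_g, so
   |a_g|^2 = |a_g (a_g - a_(tg))| is small for every g. This contradicts sum_g a_g u ~ u with
   |u| = 1. *)

lemma geometric_series_right_inverse:
  fixes r :: "'a::{real_normed_algebra_1,banach}"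
  assumes "norm r < 1"
  shows "(1 - r) * (\<Sum>n. r ^ n) = 1"
proof -
  have "(1 - r) * (\<Sum>n. r ^ n) = (\<Sum>n. (1 - r) * r ^ n)"
    by (rule suminf_mult[OF complete_algebra_summable_geometric[OF assms], symmetric])
  also have "\<dots> = (\<Sum>n. r ^ n - r ^ Suc n)"
    by (simp add: algebra_simps)
  also have "\<dots> = 1"
    using telescope_sums'[OF LIMSEQ_power_zero[OF assms]] by (simp add: sums_iff)
  finally show ?thesis .
qed

lemma cstar_algebraD:
  assumes "cstar_algebra sm st"
  shows "st (st x) = x" and "st (x * y) = st y * st x" and "norm (st x * x) = (norm x)\<^sup>2"
  using assms unfolding cstar_algebra_def by metis+

lemma cstar_dynsysD:
  assumes "cstar_dynsys G sm st alpha"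
  shows "group G" and "cstar_algebra sm st"
    and "g \<in> carrier G \<Longrightarrow> Modules.additive (alpha g)"
  using assms unfolding cstar_dynsys_def star_automorphism_def Modules.additive_def by metis+

lemma right_hilbert_moduleD:
  assumes "right_hilbert_module esm sm st ract ip"
  shows "Modules.additive (ip x)" and "Modules.additive (ract x)"
    and "ip x (ract y a) = ip x y * a" and "st (ip x y) = ip y x"
  using assms unfolding right_hilbert_module_def Modules.additive_def by metis+

lemma left_hilbert_moduleD:
  assumes "left_hilbert_module esm sm st lact ip"
  shows "lact (b * b') x = lact b (lact b' x)" and "ip (lact b x) y = b * ip x y"
    and "st (ip x y) = ip y x"
  using assms unfolding left_hilbert_module_def by metis+

lemma hilbert_bimoduleD:
  assumes "hilbert_bimodule esm smB stB smA stA lact ract ipB ipA"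
  shows "left_hilbert_module esm smB stB lact ipB"
    and "right_hilbert_module esm smA stA ract ipA"
    and "lact (ipB x y) z = ract x (ipA y z)"
  using assms unfolding hilbert_bimodule_def by metis+

lemma ip_ract_left:
  assumes "right_hilbert_module esm sm st ract ip" and "cstar_algebra sm st"
  shows "ip (ract x a) y = st a * ip x y"
proof -
  have "ip (ract x a) y = st (ip y (ract x a))"
    using right_hilbert_moduleD(4)[OF assms(1)] by simp
  also have "\<dots> = st a * ip x y"
    by (simp add: right_hilbert_moduleD[OF assms(1)] cstar_algebraD(2)[OF assms(2)])
  finally show ?thesis .
qed

lemma ip_lact_right:
  assumes "left_hilbert_module esm sm st lact ip" and "cstar_algebra sm st"
  shows "ip x (lact b y) = ip x y * st b"
proof -
  have "ip x (lact b y) = st (ip (lact b y) x)"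
    using left_hilbert_moduleD(3)[OF assms(1)] by simp
  also have "\<dots> = ip x y * st b"
    by (simp add: left_hilbert_moduleD[OF assms(1)] cstar_algebraD(2)[OF assms(2)])
  finally show ?thesis .
qed

lemma full_ip_eq_sum_ip:
  fixes ip :: "'e::ab_group_add \<Rightarrow> 'e \<Rightarrow> 'a::{real_normed_algebra_1,banach}"
  assumes "right_hilbert_module esm sm st ract ip" and "full_ip ip"
  obtains n x y where "c = (\<Sum>i<(n::nat). ip (x i) (y i))"
proof -
  \<comment> \<open>The finite sums of inner products form a right ideal containing an invertible element.\<close>
  let ?D = "{\<Sum>i<n. ip (x i) (y i) | (n::nat) (x::nat \<Rightarrow> 'e) y. True}"
  have "1 \<in> closure ?D" using assms(2) unfolding full_ip_def by simp
  then obtain d where "d \<in> ?D" and "dist d 1 < 1"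
    by (meson closure_approachable zero_less_one)
  then obtain n x y where d: "d = (\<Sum>i<(n::nat). ip (x i) (y i))" and "norm (1 - d) < 1"
    by (auto simp: dist_norm norm_minus_commute)
  then have d_inv: "d * (\<Sum>k. (1 - d) ^ k) = 1"
    using geometric_series_right_inverse[of "1 - d"] by simp
  define v where "v = (\<Sum>k. (1 - d) ^ k) * c"
  have "c = d * v" unfolding v_def by (simp add: mult.assoc[symmetric] d_inv)
  also have "\<dots> = (\<Sum>i<n. ip (x i) (ract (y i) v))"
    by (simp add: d sum_distrib_right right_hilbert_moduleD(3)[OF assms(1)])
  finally show thesis by (rule that)
qed

lemma full_ip_ract_cancel:
  fixes ip :: "'e::ab_group_add \<Rightarrow> 'e \<Rightarrow> 'a::{real_normed_algebra_1,banach}"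
  assumes "right_hilbert_module esm sm st ract ip" and "full_ip ip"
    and "\<And>z. ract z c = ract z d"
  shows "c = d"
proof -
  obtain n x y where one: "1 = (\<Sum>i<(n::nat). ip (x i) (y i))"
    using full_ip_eq_sum_ip[OF assms(1,2)] by blast
  have "c - d = (\<Sum>i<n. ip (x i) (y i)) * (c - d)" by (simp flip: one)
  also have "\<dots> = (\<Sum>i<n. ip (x i) (ract (y i) (c - d)))"
    by (simp add: sum_distrib_right right_hilbert_moduleD(3)[OF assms(1)])
  also have "\<dots> = 0"
    using assms(3) by (simp add: additive.diff[OF right_hilbert_moduleD(2)[OF assms(1)]]
        additive.zero[OF right_hilbert_moduleD(1)[OF assms(1)]])
  finally show ?thesis by simp
qed

lemma right_ip_lact_isometry:
  assumes "hilbert_bimodule esm smB stB smA stA lact ract ipB ipA"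
    and "cstar_algebra smB stB" and "full_ip ipA" and "stB b * b = 1"
  shows "ipA (lact b x) (lact b y) = ipA x y"
proof (rule full_ip_ract_cancel[OF hilbert_bimoduleD(2)[OF assms(1)] assms(3)])
  note LH = hilbert_bimoduleD(1)[OF assms(1)]
  fix z
  have "ract z (ipA (lact b x) (lact b y)) = lact (ipB z (lact b x)) (lact b y)"
    by (simp add: hilbert_bimoduleD(3)[OF assms(1)])
  also have "\<dots> = lact (ipB z x * (stB b * b)) y"
    by (simp add: ip_lact_right[OF LH assms(2)] left_hilbert_moduleD(1)[OF LH] mult.assoc)
  also have "\<dots> = ract z (ipA x y)"
    by (simp add: assms(4) hilbert_bimoduleD(3)[OF assms(1)])
  finally show "ract z (ipA (lact b x) (lact b y)) = ract z (ipA x y)" .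
qed

lemma right_ip_Ad_bimod:
  assumes "hilbert_bimodule esm smB stB smA stA lact ract ipB ipA"
    and "cstar_algebra smA stA" and "cstar_algebra smB stB" and "full_ip ipA"
    and "cstar_unitary stB u'"
  shows "ipA (Ad_bimod stB lact ract u' u x) (Ad_bimod stB lact ract u' u y) = stA u * ipA x y * u"
proof -
  note RH = hilbert_bimoduleD(2)[OF assms(1)]
  have "stB (stB u') * stB u' = 1"
    using assms(5) by (simp add: cstar_unitary_def cstar_algebraD(1)[OF assms(3)])
  then have "ipA (Ad_bimod stB lact ract u' u x) (Ad_bimod stB lact ract u' u y)
      = ipA (ract x u) (ract y u)"
    unfolding Ad_bimod_def by (rule right_ip_lact_isometry[OF assms(1,3,4)])
  also have "\<dots> = stA u * ipA x y * u"
    by (simp add: ip_ract_left[OF RH assms(2)] right_hilbert_moduleD(3)[OF RH] mult.assoc)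
  finally show ?thesis .
qed

lemma alpha_eq_Ad_if_eta_eq_Ad_bimod:
  assumes "hilbert_bimodule esm smB stB smA stA lact ract ipB ipA"
    and "cstar_algebra smA stA" and "cstar_algebra smB stB" and "full_ip ipA"
    and "compatible_action G esm lact ract ipB ipA beta alpha eta"
    and "t \<in> carrier G" and "Modules.additive (alpha t)"
    and "cstar_unitary stB u'" and "eta t = Ad_bimod stB lact ract u' u"
  shows "alpha t c = stA u * c * u"
proof -
  have alpha_ip: "alpha t (ipA x y) = stA u * ipA x y * u" for x y
  proof -
    have "alpha t (ipA x y) = ipA (eta t x) (eta t y)"
      using assms(5,6) unfolding compatible_action_def by simp
    then show ?thesis
      using right_ip_Ad_bimod[OF assms(1-4,8)] assms(9) by simp
  qed
  obtain n x y where c: "c = (\<Sum>i<(n::nat). ipA (x i) (y i))"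
    using full_ip_eq_sum_ip[OF hilbert_bimoduleD(2)[OF assms(1)] assms(4)] by blast
  show ?thesis
    by (simp add: c additive.sum[OF assms(7)] alpha_ip sum_distrib_left sum_distrib_right)
qed

lemma unitary_norm:
  assumes "cstar_algebra sm st" and "cstar_unitary st u"
  shows "norm u = 1" and "norm (st u) = 1"
proof -
  have "(norm u)\<^sup>2 = norm (st u * u)"
    by (simp only: cstar_algebraD(3)[OF assms(1)])
  also have "\<dots> = 1" using assms(2) by (simp add: cstar_unitary_def)
  finally show "norm u = 1" using norm_ge_zero[of u] by (auto simp: power2_eq_1_iff)
  have "(norm (st u))\<^sup>2 = norm (st (st u) * st u)"
    by (simp only: cstar_algebraD(3)[OF assms(1)])
  also have "\<dots> = 1" using assms(2) by (simp add: cstar_unitary_def cstar_algebraD(1)[OF assms(1)])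
  finally show "norm (st u) = 1" using norm_ge_zero[of "st u"] by (auto simp: power2_eq_1_iff)
qed

lemma positive_norm_square:
  assumes "cstar_algebra sm st" and "cstar_positive st c"
  shows "norm (c * c) = (norm c)\<^sup>2"
proof -
  obtain d where "c = st d * d" using assms(2) unfolding cstar_positive_def by blast
  then have "st c = c" by (simp add: cstar_algebraD(1,2)[OF assms(1)])
  then show ?thesis using cstar_algebraD(3)[OF assms(1), of c] by simp
qed

lemma norm_unitary_conj_diff_le:
  fixes u :: "'a::real_normed_algebra_1"
  assumes "u' * u = 1" and "norm u' = 1"
  shows "norm (u' * c * u - c) \<le> norm (c * u - u * c)"
proof -
  have "u' * c * u - c = u' * (c * u - u * c)"
    by (simp add: right_diff_distrib mult.assoc[symmetric] assms(1))
  then show ?thesis using norm_mult_ineq[of u' "c * u - u * c"] assms(2) by simp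
qed

lemma positive_contraction_orthogonal_norm:
  assumes "cstar_algebra sm st" and "positive_contraction st p" and "p * q = 0"
    and "norm (r - p) < \<epsilon>" and "norm (r - q) < \<epsilon>"
  shows "(norm p)\<^sup>2 < 2 * \<epsilon>"
proof -
  have "norm (p - q) \<le> norm (r - q) + norm (r - p)"
    using norm_triangle_ineq4[of "r - q" "r - p"] by simp
  then have pq: "norm (p - q) < 2 * \<epsilon>" using assms(4,5) by simp
  have "(norm p)\<^sup>2 = norm (p * (p - q))"
    using positive_norm_square[OF assms(1)] assms(2,3)
    by (simp add: positive_contraction_def right_diff_distrib)
  also have "\<dots> \<le> norm p * norm (p - q)" by (rule norm_mult_ineq)
  also have "\<dots> \<le> norm (p - q)"
    using assms(2) unfolding positive_contraction_def by (simp add: mult_left_le_one_le)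
  finally show ?thesis using pq by simp
qed

lemma rokhlin_towers:
  fixes stA :: "'a::{real_normed_algebra_1,banach} \<Rightarrow> 'a"
    and stB :: "'b::{real_normed_algebra_1,banach} \<Rightarrow> 'b"
    and ract :: "'e::ab_group_add \<Rightarrow> 'a \<Rightarrow> 'e"
  assumes "rokhlin G stB stA lact ract ipA beta alpha" and "\<epsilon> > 0"
  obtains a :: "'g \<Rightarrow> 'a"
  where "\<And>g. g \<in> carrier G \<Longrightarrow> positive_contraction stA (a g)"
    and "\<And>g h. g \<in> carrier G \<Longrightarrow> h \<in> carrier G \<Longrightarrow> g \<noteq> h \<Longrightarrow> a g * a h = 0"
    and "norm ((\<Sum>g\<in>carrier G. a g) * u - u) < \<epsilon>"
    and "\<And>g h. g \<in> carrier G \<Longrightarrow> h \<in> carrier G \<Longrightarrow> norm (alpha h (a g) - a (h \<otimes>\<^bsub>G\<^esub> g)) < \<epsilon>"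
    and "\<And>g. g \<in> carrier G \<Longrightarrow> norm (a g * u - u * a g) < \<epsilon>"
  using assms(1)[unfolded rokhlin_def, rule_format, OF assms(2), of "{}" "{}" "{}" "{u}",
      OF finite.emptyI finite.emptyI finite.emptyI finite.insertI[OF finite.emptyI]]
  apply (elim exE conjE)
  subgoal for a b by (rule that[of a]) simp_all
  done

lemma rokhlin_excludes_inner_automorphism:
  fixes G :: "'g monoid"
    and stA :: "'a::{real_normed_algebra_1,banach} \<Rightarrow> 'a"
    and stB :: "'b::{real_normed_algebra_1,banach} \<Rightarrow> 'b"
    and ract :: "'e::ab_group_add \<Rightarrow> 'a \<Rightarrow> 'e"
  assumes "group G" and "finite (carrier G)" and "cstar_algebra smA stA"
    and "rokhlin G stB stA lact ract ipA beta alpha"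
    and "t \<in> carrier G" and "t \<noteq> \<one>\<^bsub>G\<^esub>" and "cstar_unitary stA u"
  shows "alpha t \<noteq> (\<lambda>c. stA u * c * u)"
proof
  assume inner: "alpha t = (\<lambda>c. stA u * c * u)"
  define N where "N = card (carrier G)"
  define B :: real where "B = 1 / (2 * (real N + 1))"
  define \<epsilon> :: real where "\<epsilon> = B\<^sup>2 / 2"
  have "\<epsilon> > 0" by (simp add: \<epsilon>_def B_def)
  obtain a :: "'g \<Rightarrow> 'a"
    where pc: "\<And>g. g \<in> carrier G \<Longrightarrow> positive_contraction stA (a g)"
      and orth: "\<And>g h. g \<in> carrier G \<Longrightarrow> h \<in> carrier G \<Longrightarrow> g \<noteq> h \<Longrightarrow> a g * a h = 0"
      and total: "norm ((\<Sum>g\<in>carrier G. a g) * u - u) < \<epsilon>"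
      and equi: "\<And>g h. g \<in> carrier G \<Longrightarrow> h \<in> carrier G \<Longrightarrow>
        norm (alpha h (a g) - a (h \<otimes>\<^bsub>G\<^esub> g)) < \<epsilon>"
      and comm: "\<And>g. g \<in> carrier G \<Longrightarrow> norm (a g * u - u * a g) < \<epsilon>"
    using rokhlin_towers[OF assms(4) \<open>\<epsilon> > 0\<close>, where u = u] by blast
  have small: "norm (a g) < B" if g: "g \<in> carrier G" for g
  proof -
    have tg: "t \<otimes>\<^bsub>G\<^esub> g \<in> carrier G"
      by (rule monoid.m_closed[OF group.is_monoid[OF assms(1)] assms(5) g])
    have ne: "g \<noteq> t \<otimes>\<^bsub>G\<^esub> g"
      using group.r_cancel_one[OF assms(1) g assms(5)] assms(6) by auto
    have "norm (alpha t (a g) - a g) < \<epsilon>"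
      using norm_unitary_conj_diff_le[of "stA u" u "a g"] comm[OF g] inner
        assms(7) unitary_norm[OF assms(3,7)] unfolding cstar_unitary_def by simp
    then have "(norm (a g))\<^sup>2 < B\<^sup>2"
      using positive_contraction_orthogonal_norm[OF assms(3) pc[OF g] orth[OF g tg ne] _ equi[OF g assms(5)]]
      by (simp add: \<epsilon>_def)
    then show ?thesis by (rule power_less_imp_less_base) (simp add: B_def)
  qed
  have "1 \<le> norm ((\<Sum>g\<in>carrier G. a g) * u) + norm ((\<Sum>g\<in>carrier G. a g) * u - u)"
    using norm_triangle_sub[of u "(\<Sum>g\<in>carrier G. a g) * u"] unitary_norm(1)[OF assms(3,7)]
    by (simp add: norm_minus_commute)
  also have "norm ((\<Sum>g\<in>carrier G. a g) * u) \<le> (\<Sum>g\<in>carrier G. norm (a g))"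
    using norm_mult_ineq[of "\<Sum>g\<in>carrier G. a g" u] norm_sum[of a "carrier G"]
      unitary_norm(1)[OF assms(3,7)] by simp
  also have "\<dots> \<le> real N * B"
    unfolding N_def using small by (intro sum_bounded_above) (simp add: less_imp_le)
  finally have "1 < real N * B + \<epsilon>" using total by simp
  moreover have "real N * B + \<epsilon> < 1"
  proof -
    have "real N * B < 1 / 2" and "0 \<le> B" and "B \<le> 1 / 2"
      unfolding B_def by (simp_all add: field_simps)
    then show ?thesis using power_mono[of B "1 / 2" 2] by (simp add: \<epsilon>_def power_divide)
  qed
  ultimately show False by simp
qed

theorem corollary5p3:
  fixes G :: "'g monoid"
    and smA :: "complex \<Rightarrow> 'a::{real_normed_algebra_1,banach} \<Rightarrow> 'a" and stA :: "'a \<Rightarrow> 'a"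
    and smB :: "complex \<Rightarrow> 'b::{real_normed_algebra_1,banach} \<Rightarrow> 'b" and stB :: "'b \<Rightarrow> 'b"
    and alpha :: "'g \<Rightarrow> 'a \<Rightarrow> 'a" and beta :: "'g \<Rightarrow> 'b \<Rightarrow> 'b"
    and esm :: "complex \<Rightarrow> 'e::ab_group_add \<Rightarrow> 'e"
    and lact :: "'b \<Rightarrow> 'e \<Rightarrow> 'e" and ract :: "'e \<Rightarrow> 'a \<Rightarrow> 'e"
    and ipB :: "'e \<Rightarrow> 'e \<Rightarrow> 'b" and ipA :: "'e \<Rightarrow> 'e \<Rightarrow> 'a"
    and eta :: "'g \<Rightarrow> 'e \<Rightarrow> 'e"
  assumes "finite (carrier G)"
    and "cstar_dynsys G smA stA alpha"
    and "cstar_dynsys G smB stB beta"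
    and "hilbert_bimodule esm smB stB smA stA lact ract ipB ipA"
    and "full_ip ipA" and "full_ip ipB"
    and "compatible_action G esm lact ract ipB ipA beta alpha eta"
    and "rokhlin G stB stA lact ract ipA beta alpha"
  shows "outer_action G stB stA lact ract eta"
  unfolding outer_action_def
proof (intro ballI allI impI notI)
  fix t u u'
  assume t: "t \<in> carrier G - {\<one>\<^bsub>G\<^esub>}" and u: "cstar_unitary stA u"
    and u': "cstar_unitary stB u'" and eta: "eta t = Ad_bimod stB lact ract u' u"
  have "alpha t = (\<lambda>c. stA u * c * u)"
    using alpha_eq_Ad_if_eta_eq_Ad_bimod[OF assms(4) cstar_dynsysD(2)[OF assms(2)]
        cstar_dynsysD(2)[OF assms(3)] assms(5,7) _ cstar_dynsysD(3)[OF assms(2)] u' eta] t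
    by auto
  then show False
    using rokhlin_excludes_inner_automorphism[OF cstar_dynsysD(1)[OF assms(2)] assms(1)
        cstar_dynsysD(2)[OF assms(2)] assms(8) _ _ u] t
    by blast
qed

end
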